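(* Let $\varphi$ be a continuous Archimedean t-norm, let $m,n\ge 1$, $\mathscr{I}=\{1,\dots,m\}$, $\mathscr{J}=\{1,\dots,n\}$, let $A^{+}=(a^{+}_{ij}),A^{-}=(a^{-}_{ij})\in[0,1]^{m\times n}$ and $b=(b_i)\in[0,1]^m$. Let $S(A^{+},A^{-},b)$, $E$ and $S(e)$ ($e\in E$) be as defined in the context. Then $$S(A^{+},A^{-},b)=\bigcup_{e\in E}S(e).$$
   Context: A t-norm is a binary operation on $[0,1]$ that is commutative, associative, nondecreasing in each argument and has $1$ as neutral element; a continuous t-norm $\varphi$ is Archimedean if $\varphi(x,x)<x$ for all $x\in(0,1)$. Define $S(A^{+},A^{-},b)=\{x\in[0,1]^n:\ \max_{j\in\mathscr{J}}\max\{\varphi(a^{+}_{ij},x_j),\varphi(a^{-}_{ij},1-x_j)\}=b_i\ \forall i\in\mathscr{I}\}$. For $i\in\mathscr{I},j\in\mathscr{J}$: $S_{ij}=\{t\in[0,1]:\max\{\varphi(a^{+}_{ij},t),\varphi(a^{-}_{ij},1-t)\}=b_i\}$ and $I_{ij}=\{t\in[0,1]:\max\{\varphi(a^{+}_{ij},t),\varphi(a^{-}_{ij},1-t)\}\le b_i\}$. For $j\in\mathscr{J}$ let $I_j=\bigcap_{i\in\mathscr{I}}I_{ij}$, and let $S'_{ij}=S_{ij}\cap I_j$. For $i\in\mathscr{I}$ let $\mathscr{J}_i=\{j\in\mathscr{J}:S'_{ij}\neq\varnothing\}$. A function $e:\mathscr{I}\to\mathscr{J}$ is admissible if $e(i)\in\mathscr{J}_i(e)$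 for all $i\in\mathscr{I}$, where $\mathscr{J}_1(e)=\mathscr{J}_1$ and, for $i\ge 2$, with $\mathscr{I}_j(e,i)=\{k\in\mathscr{I}:1\le k<i,\ e(k)=j\}$, $\mathscr{J}_i(e)=\{j\in\mathscr{J}_i:\ \mathscr{I}_j(e,i)=\varnothing\ \text{or}\ S'_{ij}\cap\bigcap_{k\in\mathscr{I}_j(e,i)}S'_{kj}\neq\varnothing\}$. $E$ denotes the set of all admissible functions. For $e\in E$ and $j\in\mathscr{J}$ let $\mathscr{I}_j(e)=\{i\in\mathscr{I}:e(i)=j\}$, and let $S(e)$ be the set of all $x=(x_1,\dots,x_n)$ such that for every $j\in\mathscr{J}$: $x_j\in\bigcap_{i\in\mathscr{I}_j(e)}S'_{ij}$ if $\mathscr{I}_j(e)\neq\varnothing$, and $x_j\in I_j$ if $\mathscr{I}_j(e)=\varnothing$. (A union over an empty index set is $\varnothing$.) *)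

theory Defs
  imports "HOL-Analysis.Analysis" "HOL-Library.FuncSet"
begin

text \<open>A t-norm on [0,1], represented as a real function of two arguments
  whose behaviour matters only on [0,1] x [0,1].\<close>
definition tnorm :: "(real \<Rightarrow> real \<Rightarrow> real) \<Rightarrow> bool" where
  "tnorm \<phi> \<longleftrightarrow>
     (\<forall>x\<in>{0..1}. \<forall>y\<in>{0..1}. \<phi> x y \<in> {0..1}) \<and>
     (\<forall>x\<in>{0..1}. \<forall>y\<in>{0..1}. \<phi> x y = \<phi> y x) \<and>
     (\<forall>x\<in>{0..1}. \<forall>y\<in>{0..1}. \<forall>z\<in>{0..1}. \<phi> x (\<phi> y z) = \<phi> (\<phi> x y) z) \<and>
     (\<forall>x\<in>{0..1}. \<forall>x'\<in>{0..1}. \<forall>y\<in>{0..1}. x \<le> x' \<longrightarrow> \<phi> x y \<le> \<phi> x' y) \<and>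
     (\<forall>x\<in>{0..1}. \<forall>y\<in>{0..1}. \<forall>y'\<in>{0..1}. y \<le> y' \<longrightarrow> \<phi> x y \<le> \<phi> x y') \<and>
     (\<forall>x\<in>{0..1}. \<phi> x 1 = x)"

definition continuous_archimedean_tnorm :: "(real \<Rightarrow> real \<Rightarrow> real) \<Rightarrow> bool" where
  "continuous_archimedean_tnorm \<phi> \<longleftrightarrow>
     tnorm \<phi> \<and>
     continuous_on ({0..1} \<times> {0..1}) (\<lambda>(x, y). \<phi> x y) \<and>
     (\<forall>x\<in>{0<..<1}. \<phi> x x < x)"

definition lhs :: "(real \<Rightarrow> real \<Rightarrow> real) \<Rightarrow> real \<Rightarrow> real \<Rightarrow> real \<Rightarrow> real" where
  "lhs \<phi> ap am t = max (\<phi> ap t) (\<phi> am (1 - t))"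

definition sol_set ::
  "(real \<Rightarrow> real \<Rightarrow> real) \<Rightarrow> (nat \<Rightarrow> nat \<Rightarrow> real) \<Rightarrow> (nat \<Rightarrow> nat \<Rightarrow> real) \<Rightarrow> (nat \<Rightarrow> real)
   \<Rightarrow> nat \<Rightarrow> nat \<Rightarrow> (nat \<Rightarrow> real) set" where
  "sol_set \<phi> Ap Am b m n =
     {x \<in> {1..n} \<rightarrow>\<^sub>E {0..1}.
        \<forall>i\<in>{1..m}. (MAX j\<in>{1..n}. lhs \<phi> (Ap i j) (Am i j) (x j)) = b i}"

definition S_ij where
  "S_ij \<phi> Ap Am b i j = {t\<in>{0..1::real}. lhs \<phi> (Ap i j) (Am i j) t = b i}"

definition I_ij where
  "I_ij \<phi> Ap Am b i j = {t\<in>{0..1::real}. lhs \<phi> (Ap i j) (Am i j) t \<le> b i}"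

definition I_j where
  "I_j \<phi> Ap Am b m j = (\<Inter>i\<in>{1..m}. I_ij \<phi> Ap Am b i j)"

definition S'_ij where
  "S'_ij \<phi> Ap Am b m i j = S_ij \<phi> Ap Am b i j \<inter> I_j \<phi> Ap Am b m j"

definition J_i where
  "J_i \<phi> Ap Am b m n i = {j\<in>{1..n}. S'_ij \<phi> Ap Am b m i j \<noteq> {}}"

definition I_j_e_i :: "(nat \<Rightarrow> nat) \<Rightarrow> nat \<Rightarrow> nat \<Rightarrow> nat set" where
  "I_j_e_i e i j = {k. 1 \<le> k \<and> k < i \<and> e k = j}"

definition J_i_e where
  "J_i_e \<phi> Ap Am b m n e i =
     (if i = 1 then J_i \<phi> Ap Am b m n 1
      else {j \<in> J_i \<phi> Ap Am b m n i.
              I_j_e_i e i j = {} \<or>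
              S'_ij \<phi> Ap Am b m i j \<inter> (\<Inter>k\<in>I_j_e_i e i j. S'_ij \<phi> Ap Am b m k j) \<noteq> {}})"

definition admissible_set where
  "admissible_set \<phi> Ap Am b m n =
     {e \<in> {1..m} \<rightarrow>\<^sub>E {1..n}. \<forall>i\<in>{1..m}. e i \<in> J_i_e \<phi> Ap Am b m n e i}"

definition I_j_e :: "nat \<Rightarrow> (nat \<Rightarrow> nat) \<Rightarrow> nat \<Rightarrow> nat set" where
  "I_j_e m e j = {i\<in>{1..m}. e i = j}"

definition S_e where
  "S_e \<phi> Ap Am b m n e =
     {x \<in> {1..n} \<rightarrow>\<^sub>E UNIV.
        \<forall>j\<in>{1..n}.
          (I_j_e m e j \<noteq> {} \<longrightarrow> x j \<in> (\<Inter>i\<in>I_j_e m e j. S'_ij \<phi> Ap Am b m i j)) \<and>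
          (I_j_e m e j = {} \<longrightarrow> x j \<in> I_j \<phi> Ap Am b m j)}"

end

theory Submission
  imports Defs
begin

text \<open>The identity is purely combinatorial: a point solves the system iff every coordinate
  lies in I_j (no equation is exceeded) and every equation i is attained at some coordinate j,
  i.e. x j \<in> S'_ij i j.  Choosing such a j for each i gives a map e, which is admissible
  because the common value x (e i) witnesses every intersection demanded of it; conversely
  every point of S(e) attains equation i at coordinate e i.\<close>

lemma I_j_subset_unit_interval:
  fixes m :: nat
  assumes "m \<ge> 1"
  shows "I_j \<phi> Ap Am b m j \<subseteq> {0..1}"
proof
  fix t
  assume "t \<in> I_j \<phi> Ap Am b m j"
  moreover have "1 \<in> {1..m}"
    using assms by simp
  ultimately have "t \<in> I_ij \<phi> Ap Am b 1 j"
    unfolding I_j_def by blast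
  then show "t \<in> {0..1}"
    unfolding I_ij_def by auto
qed

lemma S'_ij_subset_I_j: "S'_ij \<phi> Ap Am b m i j \<subseteq> I_j \<phi> Ap Am b m j"
  unfolding S'_ij_def by auto

lemma MAX_eq_iff_bounded_attained:
  fixes f :: "'a \<Rightarrow> 'b::linorder"
  assumes "finite A" and "A \<noteq> {}"
  shows "(MAX x\<in>A. f x) = c \<longleftrightarrow> (\<forall>x\<in>A. f x \<le> c) \<and> (\<exists>x\<in>A. f x = c)"
  using assms by (simp add: Max_eq_iff) blast

lemma sol_set_eq:
  assumes "m \<ge> 1" and "n \<ge> 1"
  shows "sol_set \<phi> Ap Am b m n =
    {x \<in> {1..n} \<rightarrow>\<^sub>E UNIV. (\<forall>j\<in>{1..n}. x j \<in> I_j \<phi> Ap Am b m j) \<and>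
       (\<forall>i\<in>{1..m}. \<exists>j\<in>{1..n}. x j \<in> S'_ij \<phi> Ap Am b m i j)}"
    (is "_ = ?R")
proof -
  let ?L = "\<lambda>x i j. lhs \<phi> (Ap i j) (Am i j) (x j)"
  have row_eq: "(MAX j\<in>{1..n}. ?L x i j) = b i \<longleftrightarrow>
      (\<forall>j\<in>{1..n}. ?L x i j \<le> b i) \<and> (\<exists>j\<in>{1..n}. ?L x i j = b i)" for x i
    using \<open>n \<ge> 1\<close> by (intro MAX_eq_iff_bounded_attained) auto
  have "x \<in> sol_set \<phi> Ap Am b m n \<longleftrightarrow> x \<in> ?R" for x
  proof
    assume "x \<in> sol_set \<phi> Ap Am b m n"
    then have x01: "x \<in> {1..n} \<rightarrow>\<^sub>E {0..1}"
      and rows: "\<forall>i\<in>{1..m}. (\<forall>j\<in>{1..n}. ?L x i j \<le> b i) \<and> (\<exists>j\<in>{1..n}. ?L x i j = b i)"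
      unfolding sol_set_def row_eq by auto
    have Ij: "x j \<in> I_j \<phi> Ap Am b m j" if "j \<in> {1..n}" for j
      using PiE_mem[OF x01 that] rows that unfolding I_j_def I_ij_def by auto
    have "x j \<in> S'_ij \<phi> Ap Am b m i j" if "j \<in> {1..n}" and "?L x i j = b i" for i j
      using PiE_mem[OF x01 that(1)] Ij[OF that(1)] that(2) unfolding S'_ij_def S_ij_def by auto
    with rows have "\<forall>i\<in>{1..m}. \<exists>j\<in>{1..n}. x j \<in> S'_ij \<phi> Ap Am b m i j"
      by blast
    moreover have "x \<in> {1..n} \<rightarrow>\<^sub>E UNIV"
      using x01 by (auto simp: PiE_iff)
    ultimately show "x \<in> ?R"
      using Ij by blast
  next
    assume "x \<in> ?R"
    then have ext: "x \<in> {1..n} \<rightarrow>\<^sub>E UNIV"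
      and Ij: "\<forall>j\<in>{1..n}. x j \<in> I_j \<phi> Ap Am b m j"
      and attained: "\<forall>i\<in>{1..m}. \<exists>j\<in>{1..n}. x j \<in> S'_ij \<phi> Ap Am b m i j"
      by blast+
    have "x j \<in> {0..1}" if "j \<in> {1..n}" for j
      using Ij that by (intro subsetD[OF I_j_subset_unit_interval[OF \<open>m \<ge> 1\<close>]]) blast
    with ext have x01: "x \<in> {1..n} \<rightarrow>\<^sub>E {0..1}"
      by (simp add: PiE_iff)
    have "\<forall>i\<in>{1..m}. \<forall>j\<in>{1..n}. ?L x i j \<le> b i"
      using Ij unfolding I_j_def I_ij_def by blast
    moreover have "\<forall>i\<in>{1..m}. \<exists>j\<in>{1..n}. ?L x i j = b i"
      using attained unfolding S'_ij_def S_ij_def by blast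
    ultimately show "x \<in> sol_set \<phi> Ap Am b m n"
      unfolding sol_set_def row_eq using x01 by blast
  qed
  then show ?thesis by blast
qed

lemma mem_S_e_iff:
  assumes "e \<in> {1..m} \<rightarrow>\<^sub>E {1..n}"
  shows "x \<in> S_e \<phi> Ap Am b m n e \<longleftrightarrow>
    x \<in> {1..n} \<rightarrow>\<^sub>E UNIV \<and> (\<forall>j\<in>{1..n}. x j \<in> I_j \<phi> Ap Am b m j) \<and>
    (\<forall>i\<in>{1..m}. x (e i) \<in> S'_ij \<phi> Ap Am b m i (e i))"
proof
  assume x: "x \<in> S_e \<phi> Ap Am b m n e"
  have "x (e i) \<in> S'_ij \<phi> Ap Am b m i (e i)" if "i \<in> {1..m}" for i
  proof -
    have "e i \<in> {1..n}" and "i \<in> I_j_e m e (e i)"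
      using assms that unfolding I_j_e_def by auto
    with x show ?thesis unfolding S_e_def by blast
  qed
  moreover have "x j \<in> I_j \<phi> Ap Am b m j" if "j \<in> {1..n}" for j
  proof (cases "I_j_e m e j = {}")
    case True
    with x that show ?thesis unfolding S_e_def by blast
  next
    case False
    then obtain i where i: "i \<in> I_j_e m e j" by auto
    have "x j \<in> (\<Inter>i\<in>I_j_e m e j. S'_ij \<phi> Ap Am b m i j)"
      using x that False unfolding S_e_def by blast
    with i have "x j \<in> S'_ij \<phi> Ap Am b m i j" by blast
    then show ?thesis
      by (rule subsetD[OF S'_ij_subset_I_j])
  qed
  moreover have "x \<in> {1..n} \<rightarrow>\<^sub>E UNIV"
    using x unfolding S_e_def by blast
  ultimately show "x \<in> {1..n} \<rightarrow>\<^sub>E UNIV \<and> (\<forall>j\<in>{1..n}. x j \<in> I_j \<phi> Ap Am b m j) \<and>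
      (\<forall>i\<in>{1..m}. x (e i) \<in> S'_ij \<phi> Ap Am b m i (e i))"
    by blast
next
  assume "x \<in> {1..n} \<rightarrow>\<^sub>E UNIV \<and> (\<forall>j\<in>{1..n}. x j \<in> I_j \<phi> Ap Am b m j) \<and>
      (\<forall>i\<in>{1..m}. x (e i) \<in> S'_ij \<phi> Ap Am b m i (e i))"
  then have ext: "x \<in> {1..n} \<rightarrow>\<^sub>E UNIV"
    and Ij: "\<forall>j\<in>{1..n}. x j \<in> I_j \<phi> Ap Am b m j"
    and witness: "\<forall>i\<in>{1..m}. x (e i) \<in> S'_ij \<phi> Ap Am b m i (e i)"
    by blast+
  have "x j \<in> S'_ij \<phi> Ap Am b m i j" if "i \<in> I_j_e m e j" for i j
  proof -
    from that have "i \<in> {1..m}" and "e i = j"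
      unfolding I_j_e_def by auto
    with witness show ?thesis by blast
  qed
  with ext Ij show "x \<in> S_e \<phi> Ap Am b m n e"
    unfolding S_e_def by blast
qed

lemma admissible_if_common_witness:
  assumes "e \<in> {1..m} \<rightarrow>\<^sub>E {1..n}"
    and witness: "\<forall>i\<in>{1..m}. x (e i) \<in> S'_ij \<phi> Ap Am b m i (e i)"
  shows "e \<in> admissible_set \<phi> Ap Am b m n"
proof -
  have "e i \<in> J_i_e \<phi> Ap Am b m n e i" if i: "i \<in> {1..m}" for i
  proof -
    have "e i \<in> J_i \<phi> Ap Am b m n i"
      using assms i unfolding J_i_def by auto
    moreover have "x (e i) \<in> S'_ij \<phi> Ap Am b m k (e i)" if "k \<in> I_j_e_i e i (e i)" for k
    proof -
      have "k \<in> {1..m}" and "e k = e i"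
        using i that unfolding I_j_e_i_def by auto
      with witness show ?thesis by metis
    qed
    then have "x (e i) \<in> S'_ij \<phi> Ap Am b m i (e i) \<inter>
        (\<Inter>k\<in>I_j_e_i e i (e i). S'_ij \<phi> Ap Am b m k (e i))"
      using witness i by blast
    ultimately show ?thesis
      unfolding J_i_e_def by auto
  qed
  with assms(1) show ?thesis
    unfolding admissible_set_def by blast
qed

lemma ex_PiE_selector:
  assumes "\<forall>i\<in>I. \<exists>j\<in>J. P i j"
  shows "\<exists>e\<in>I \<rightarrow>\<^sub>E J. \<forall>i\<in>I. P i (e i)"
proof -
  from assms have "\<forall>i\<in>I. \<exists>j. j \<in> J \<and> P i j" by blast
  from bchoice[OF this] obtain f where "\<forall>i\<in>I. f i \<in> J \<and> P i (f i)" by blast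
  then show ?thesis by (intro bexI[of _ "restrict f I"]) auto
qed

theorem theorem3:
  fixes \<phi> :: "real \<Rightarrow> real \<Rightarrow> real"
    and Ap Am :: "nat \<Rightarrow> nat \<Rightarrow> real" and b :: "nat \<Rightarrow> real" and m n :: nat
  assumes "continuous_archimedean_tnorm \<phi>"
    and "m \<ge> 1" and "n \<ge> 1"
    and "\<forall>i\<in>{1..m}. \<forall>j\<in>{1..n}. Ap i j \<in> {0..1} \<and> Am i j \<in> {0..1}"
    and "\<forall>i\<in>{1..m}. b i \<in> {0..1}"
  shows "sol_set \<phi> Ap Am b m n = (\<Union>e\<in>admissible_set \<phi> Ap Am b m n. S_e \<phi> Ap Am b m n e)"
proof (intro set_eqI iffI)
  fix x
  assume "x \<in> sol_set \<phi> Ap Am b m n"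
  then have x: "x \<in> {1..n} \<rightarrow>\<^sub>E UNIV" "\<forall>j\<in>{1..n}. x j \<in> I_j \<phi> Ap Am b m j"
    and attained: "\<forall>i\<in>{1..m}. \<exists>j\<in>{1..n}. x j \<in> S'_ij \<phi> Ap Am b m i j"
    unfolding sol_set_eq[OF \<open>m \<ge> 1\<close> \<open>n \<ge> 1\<close>] by blast+
  from ex_PiE_selector[OF attained] obtain e where e: "e \<in> {1..m} \<rightarrow>\<^sub>E {1..n}"
    and witness: "\<forall>i\<in>{1..m}. x (e i) \<in> S'_ij \<phi> Ap Am b m i (e i)"
    by blast
  have "e \<in> admissible_set \<phi> Ap Am b m n"
    using admissible_if_common_witness[OF e witness] .
  moreover have "x \<in> S_e \<phi> Ap Am b m n e"
    using mem_S_e_iff[OF e] x witness by blast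
  ultimately show "x \<in> (\<Union>e\<in>admissible_set \<phi> Ap Am b m n. S_e \<phi> Ap Am b m n e)" by blast
next
  fix x
  assume "x \<in> (\<Union>e\<in>admissible_set \<phi> Ap Am b m n. S_e \<phi> Ap Am b m n e)"
  then obtain e where "e \<in> admissible_set \<phi> Ap Am b m n" and x: "x \<in> S_e \<phi> Ap Am b m n e"
    by blast
  then have e: "e \<in> {1..m} \<rightarrow>\<^sub>E {1..n}"
    unfolding admissible_set_def by blast
  with x have "x \<in> {1..n} \<rightarrow>\<^sub>E UNIV" "\<forall>j\<in>{1..n}. x j \<in> I_j \<phi> Ap Am b m j"
    and witness: "\<forall>i\<in>{1..m}. x (e i) \<in> S'_ij \<phi> Ap Am b m i (e i)"
    using mem_S_e_iff by blast+
  moreover have "\<forall>i\<in>{1..m}. \<exists>j\<in>{1..n}. x j \<in> S'_ij \<phi> Ap Am b m i j"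
    using PiE_mem[OF e] witness by blast
  ultimately show "x \<in> sol_set \<phi> Ap Am b m n"
    unfolding sol_set_eq[OF \<open>m \<ge> 1\<close> \<open>n \<ge> 1\<close>] by blast
qed

end
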